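(* Assume the setting below and that $\mathcal{S}$ is pseudo-symmetric. Let $(x_0,y_0)\in L$ be the point with $\varphi(x_0,y_0)=g(\mathcal{S})+a$ and $(x_1,y_1)\in L$ the point with $\varphi(x_1,y_1)=g(\mathcal{S})/2+a$. Then (a) $2\varphi(x_1,y_1)=\varphi(x_0,y_0)+a$; and (b) if $(x',y'),(x'',y'')\in L$ satisfy $2\varphi(x_1,y_1)=\varphi(x',y')+\varphi(x'',y'')$, then $(x',y')=(x'',y'')=(x_1,y_1)$.
   Context: Setting (AA-semigroups). Let $a,d,k,c$ be positive integers with $\gcd(a,a+d,\ldots,a+kd,c)=1$ and $\gcd(a,d)=1$, and let $\mathcal{S}=\langle a,a+d,\ldots,a+kd,c\rangle$ be the numerical semigroup of non-negative integer combinations of these generators; $g(\mathcal{S})$ is its Frobenius number (largest integer not in $\mathcal{S}$). $\mathcal{S}$ is pseudo-symmetric if $g(\mathcal{S})$ is even and $\mathcal{S}\cup(g(\mathcal{S})-\mathcal{S})=\mathbb{Z}\setminus\{g(\mathcal{S})/2\}$. Put $s_{-1}=a$ and let $s_0$ be the unique integer with $ds_0\equiv c\pmod a$, $0\le s_0<a$. If $s_0=0$ set $m=-1$. Otherwise define $q_{i+1},s_{i+1}$ for $i=0,1,2,\ldots$ by $s_{i-1}=q_{i+1}s_i-s_{i+1}$ with $0\le s_{i+1}<s_i$, and let $m$ be the index with $s_m>0=s_{m+1}$ (so $s_m=\gcd(a,c)$). Define $P_{-1}=0$, $P_0=1$, $P_{i+1}=q_{i+1}P_i-P_{i-1}$ for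 $i=0,\ldots,m$, and $R_i=\frac1a\big((a+kd)s_i-kcP_i\big)$ for $-1\le i\le m+1$; these are integers with $-c/s_m=R_{m+1}<R_m<\cdots<R_0<R_{-1}=a+kd$. Let $v$ be the unique integer with $R_{v+1}\le0<R_v$. Let $L=A\cup B$, where $A=\{(x,y)\in\mathbb{Z}^2:0\le x\le s_v-1,\ 0\le y\le P_{v+1}-P_v-1\}$ and $B=\{(x,y)\in\mathbb{Z}^2:0\le x\le s_v-s_{v+1}-1,\ P_{v+1}-P_v\le y\le P_{v+1}-1\}$. Define $\varphi:\mathbb{Z}^2\to\mathbb{Z}$, $\varphi(x,y)=\lceil x/k\rceil a+xd+yc$. It is known (Rødseth) that $|L|=a$ and $\varphi$ maps $L$ bijectively onto $\mathrm{Ap}(\mathcal{S};a)=\{s\in\mathcal{S}:s-a\notin\mathcal{S}\}$; consequently $g(\mathcal{S})+a=\max\varphi(L)$ is attained at $(s_v-s_{v+1}-1,P_{v+1}-1)$ or at $(s_v-1,P_{v+1}-P_v-1)$. *)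

theory Defs
  imports Complex_Main "HOL-Number_Theory.Cong"
begin

definition AA_gens :: "int \<Rightarrow> int \<Rightarrow> int \<Rightarrow> int \<Rightarrow> int set" where
  "AA_gens a d k c = {a + j * d | j. 0 \<le> j \<and> j \<le> k} \<union> {c}"

inductive_set num_semigroup :: "int set \<Rightarrow> int set" for G :: "int set" where
  zero: "0 \<in> num_semigroup G"
| add: "x \<in> num_semigroup G \<Longrightarrow> g \<in> G \<Longrightarrow> x + g \<in> num_semigroup G"

definition AA_semigroup :: "int \<Rightarrow> int \<Rightarrow> int \<Rightarrow> int \<Rightarrow> int set" where
  "AA_semigroup a d k c = num_semigroup (AA_gens a d k c)"

definition frobenius :: "int set \<Rightarrow> int" where
  "frobenius S = (GREATEST n. n \<notin> S)"

definition pseudo_symmetric :: "int set \<Rightarrow> bool" where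
  "pseudo_symmetric S \<longleftrightarrow> even (frobenius S) \<and>
     S \<union> {frobenius S - s | s. s \<in> S} = UNIV - {frobenius S div 2}"

definition s_zero :: "int \<Rightarrow> int \<Rightarrow> int \<Rightarrow> int" where
  "s_zero a d c = (THE s. 0 \<le> s \<and> s < a \<and> [d * s = c] (mod a))"

text \<open>State n = (s_{n-1}, s_n, P_{n-1}, P_n).  Recursion
  s_{i-1} = q_{i+1} s_i - s_{i+1}, 0 <= s_{i+1} < s_i (so q_{i+1} = ceil(s_{i-1}/s_i)),
  P_{i+1} = q_{i+1} P_i - P_{i-1}.  Once s_n = 0 the state is frozen (junk values
  beyond the meaningful range).\<close>
fun AA_state :: "int \<Rightarrow> int \<Rightarrow> nat \<Rightarrow> int \<times> int \<times> int \<times> int" where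
  "AA_state a s0 0 = (a, s0, 0, 1)"
| "AA_state a s0 (Suc n) =
     (case AA_state a s0 n of (u, w, p, r) \<Rightarrow>
        if w = 0 then (0, 0, r, r)
        else (let snew = (- u) mod w; q = (u + snew) div w
              in (w, snew, r, q * r - p)))"

definition s_seq :: "int \<Rightarrow> int \<Rightarrow> int \<Rightarrow> int \<Rightarrow> int" where
  "s_seq a d c i = fst (AA_state a (s_zero a d c) (nat (i + 1)))"

definition P_seq :: "int \<Rightarrow> int \<Rightarrow> int \<Rightarrow> int \<Rightarrow> int" where
  "P_seq a d c i = fst (snd (snd (AA_state a (s_zero a d c) (nat (i + 1)))))"

definition m_idx :: "int \<Rightarrow> int \<Rightarrow> int \<Rightarrow> int" where
  "m_idx a d c = (THE m. -1 \<le> m \<and> s_seq a d c m > 0 \<and> s_seq a d c (m + 1) = 0)"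

definition R_seq :: "int \<Rightarrow> int \<Rightarrow> int \<Rightarrow> int \<Rightarrow> int \<Rightarrow> int" where
  "R_seq a d k c i = ((a + k * d) * s_seq a d c i - k * c * P_seq a d c i) div a"

definition v_idx :: "int \<Rightarrow> int \<Rightarrow> int \<Rightarrow> int \<Rightarrow> int" where
  "v_idx a d k c = (THE v. -1 \<le> v \<and> v \<le> m_idx a d c \<and>
       R_seq a d k c (v + 1) \<le> 0 \<and> 0 < R_seq a d k c v)"

definition L_set :: "int \<Rightarrow> int \<Rightarrow> int \<Rightarrow> int \<Rightarrow> (int \<times> int) set" where
  "L_set a d k c =
     (let v = v_idx a d k c; sv = s_seq a d c v; sv1 = s_seq a d c (v + 1);
          Pv = P_seq a d c v; Pv1 = P_seq a d c (v + 1)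
      in {(x, y). 0 \<le> x \<and> x \<le> sv - 1 \<and> 0 \<le> y \<and> y \<le> Pv1 - Pv - 1}
       \<union> {(x, y). 0 \<le> x \<and> x \<le> sv - sv1 - 1 \<and> Pv1 - Pv \<le> y \<and> y \<le> Pv1 - 1})"

definition phi :: "int \<Rightarrow> int \<Rightarrow> int \<Rightarrow> int \<Rightarrow> int \<times> int \<Rightarrow> int" where
  "phi a d k c p = (case p of (x, y) \<Rightarrow>
      \<lceil>real_of_int x / real_of_int k\<rceil> * a + x * d + y * c)"

end

theory Submission
  imports Defs
begin

(*
  The vectors (s_v, -P_v) and (-s_(v+1), P_(v+1)) span the lattice of all (X, Y) with
  a | dX + cY, whose index is a = s_v P_(v+1) - s_(v+1) P_v; the staircase L meets every
  coset of it at most once, so phi is injective on L. Every element of S is phi(X, Y) + ta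
  with X, Y, t >= 0, and because R_v > 0 >= R_(v+1) the lattice moves that carry (X, Y)
  into L do not increase phi. Hence phi(p) - a is a gap of S for every p in L. The theorem
  is then a statement about gaps of a pseudo-symmetric semigroup: two gaps with sum g(S)
  must both equal g(S)/2.
*)

lemma ceiling_add_div_le:
  fixes k s t X :: int
  assumes "0 < k" "s \<le> k * t"
  shows "\<lceil>real_of_int (X + s) / real_of_int k\<rceil> \<le> \<lceil>real_of_int X / real_of_int k\<rceil> + t"
proof -
  have "real_of_int s / real_of_int k \<le> real_of_int t"
    using assms by (simp add: divide_le_eq mult.commute flip: of_int_mult)
  then have "real_of_int (X + s) / real_of_int k \<le> real_of_int X / real_of_int k + real_of_int t"
    by (simp add: add_divide_distrib)
  from ceiling_mono[OF this] show ?thesis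
    by simp
qed

lemma phi_cong: "[phi a d k c (x, y) = d * x + c * y] (mod a)"
  by (simp add: phi_def cong_iff_dvd_diff)

lemma phi_shift_le:
  fixes a d k c s q X Y :: int
  assumes "0 < a" "0 < k"
    and lattice: "a dvd d * s + c * q"
    and slope: "(a + k * d) * s + k * c * q \<le> 0"
  shows "phi a d k c (X + s, Y + q) \<le> phi a d k c (X, Y)"
proof -
  obtain t where t: "d * s + c * q = a * t"
    using lattice by (elim dvdE)
  have "(a + k * d) * s + k * c * q = a * s + k * (a * t)"
    by (simp add: algebra_simps flip: t)
  then have "a * s \<le> a * (k * - t)"
    using slope by (simp add: algebra_simps)
  then have "s \<le> k * - t"
    using \<open>0 < a\<close> mult_left_le_imp_le by blast
  from ceiling_add_div_le[OF \<open>0 < k\<close> this, of X]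
  have ceil: "\<lceil>real_of_int (X + s) / real_of_int k\<rceil> \<le> \<lceil>real_of_int X / real_of_int k\<rceil> - t"
    by simp
  have "phi a d k c (X + s, Y + q)
      = \<lceil>real_of_int (X + s) / real_of_int k\<rceil> * a + X * d + Y * c + a * t"
    by (simp add: phi_def algebra_simps flip: t)
  also have "\<dots> \<le> (\<lceil>real_of_int X / real_of_int k\<rceil> - t) * a + X * d + Y * c + a * t"
    using ceil \<open>0 < a\<close> by simp
  also have "\<dots> = phi a d k c (X, Y)"
    by (simp add: phi_def algebra_simps)
  finally show ?thesis .
qed

lemma AA_semigroup_elem_eq_phi:
  assumes "n \<in> AA_semigroup a d k c" "0 < k"
  shows "\<exists>X Y t. 0 \<le> X \<and> 0 \<le> Y \<and> 0 \<le> t \<and> n = phi a d k c (X, Y) + t * a"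
  using assms(1) unfolding AA_semigroup_def
proof (induction rule: num_semigroup.induct)
  case zero
  show ?case
    by (rule exI[of _ 0], rule exI[of _ 0], rule exI[of _ 0]) (simp add: phi_def)
next
  case (add n g)
  then obtain X Y t where XYt: "0 \<le> X" "0 \<le> Y" "0 \<le> t" "n = phi a d k c (X, Y) + t * a"
    by blast
  from \<open>g \<in> AA_gens a d k c\<close> consider j where "0 \<le> j" "j \<le> k" "g = a + j * d" | "g = c"
    unfolding AA_gens_def by blast
  then show ?case
  proof cases
    case 1
    define t' where "t' = t + \<lceil>real_of_int X / real_of_int k\<rceil> + 1 - \<lceil>real_of_int (X + j) / real_of_int k\<rceil>"
    have "\<lceil>real_of_int (X + j) / real_of_int k\<rceil> \<le> \<lceil>real_of_int X / real_of_int k\<rceil> + 1"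
      using ceiling_add_div_le[OF \<open>0 < k\<close>, of j 1] \<open>j \<le> k\<close> by simp
    then have "0 \<le> t'"
      using XYt by (simp add: t'_def)
    moreover have "n + g = phi a d k c (X + j, Y) + t' * a"
      using XYt 1 by (simp add: phi_def t'_def algebra_simps)
    ultimately show ?thesis
      using XYt \<open>0 \<le> j\<close> by (intro exI[of _ "X + j"] exI[of _ Y] exI[of _ t']) auto
  next
    case 2
    have "n + g = phi a d k c (X, Y + 1) + t * a"
      using XYt 2 by (simp add: phi_def algebra_simps)
    then show ?thesis
      using XYt by (intro exI[of _ X] exI[of _ "Y + 1"] exI[of _ t]) auto
  qed
qed

lemma pseudo_symmetric_gap_sum:
  assumes "pseudo_symmetric S" "u \<notin> S" "w \<notin> S" "u + w = frobenius S"
  shows "u = frobenius S div 2"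
proof (rule ccontr)
  assume "u \<noteq> frobenius S div 2"
  then have "u \<in> S \<union> {frobenius S - s | s. s \<in> S}"
    using assms(1) unfolding pseudo_symmetric_def by blast
  then obtain s where "s \<in> S" "u = frobenius S - s"
    using assms(2) by blast
  moreover from this assms(4) have "w = s"
    by simp
  ultimately show False
    using assms(3) by simp
qed

(* sv, sv1, Pv, Pv1 play the roles of s_v, s_(v+1), P_v, P_(v+1);
   R_pos and R_nonpos say a R_v > 0 >= a R_(v+1). *)
locale staircase =
  fixes a d k c sv sv1 Pv Pv1 :: int
  assumes pos: "0 < a" "0 < k"
    and coprime_ad: "coprime a d"
    and s_bounds: "0 \<le> sv1" "sv1 < sv"
    and P_bounds: "0 \<le> Pv" "Pv < Pv1"
    and det: "sv * Pv1 - sv1 * Pv = a"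
    and lattice0: "a dvd d * sv - c * Pv"
    and lattice1: "a dvd d * sv1 - c * Pv1"
    and R_pos: "0 < (a + k * d) * sv - k * c * Pv"
    and R_nonpos: "(a + k * d) * sv1 - k * c * Pv1 \<le> 0"
begin

abbreviation \<phi> :: "int \<times> int \<Rightarrow> int" where
  "\<phi> \<equiv> phi a d k c"

definition L :: "(int \<times> int) set" where
  "L = {(x, y). 0 \<le> x \<and> x \<le> sv - 1 \<and> 0 \<le> y \<and> y \<le> Pv1 - Pv - 1}
     \<union> {(x, y). 0 \<le> x \<and> x \<le> sv - sv1 - 1 \<and> Pv1 - Pv \<le> y \<and> y \<le> Pv1 - 1}"

lemma L_bounds: "(x, y) \<in> L \<Longrightarrow> 0 \<le> x \<and> x < sv \<and> 0 \<le> y \<and> y < Pv1"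
  unfolding L_def using s_bounds P_bounds by auto

lemma lattice_coordinates:
  assumes "a dvd d * X + c * Y"
  obtains \<alpha> \<beta> where "X = \<alpha> * sv - \<beta> * sv1" "Y = \<beta> * Pv1 - \<alpha> * Pv"
proof -
  have "d * (X * Pv1 + Y * sv1) = (d * X + c * Y) * Pv1 + Y * (d * sv1 - c * Pv1)"
    by (simp add: algebra_simps)
  then have "a dvd d * (X * Pv1 + Y * sv1)"
    using assms lattice1 by simp
  then obtain \<alpha> where \<alpha>: "X * Pv1 + Y * sv1 = a * \<alpha>"
    using coprime_ad by (auto simp: coprime_dvd_mult_right_iff elim: dvdE)
  have "d * (X * Pv + Y * sv) = (d * X + c * Y) * Pv + Y * (d * sv - c * Pv)"
    by (simp add: algebra_simps)
  then have "a dvd d * (X * Pv + Y * sv)"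
    using assms lattice0 by simp
  then obtain \<beta> where \<beta>: "X * Pv + Y * sv = a * \<beta>"
    using coprime_ad by (auto simp: coprime_dvd_mult_right_iff elim: dvdE)
  have "a * (\<alpha> * sv - \<beta> * sv1) = (a * \<alpha>) * sv - (a * \<beta>) * sv1"
    by (simp add: algebra_simps)
  also have "\<dots> = X * (sv * Pv1 - sv1 * Pv)"
    unfolding \<alpha>[symmetric] \<beta>[symmetric] by (simp add: algebra_simps)
  finally have "X = \<alpha> * sv - \<beta> * sv1"
    using det pos(1) by simp
  have "a * (\<beta> * Pv1 - \<alpha> * Pv) = (a * \<beta>) * Pv1 - (a * \<alpha>) * Pv"
    by (simp add: algebra_simps)
  also have "\<dots> = Y * (sv * Pv1 - sv1 * Pv)"
    unfolding \<alpha>[symmetric] \<beta>[symmetric] by (simp add: algebra_simps)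
  finally have "Y = \<beta> * Pv1 - \<alpha> * Pv"
    using det pos(1) by simp
  with \<open>X = \<alpha> * sv - \<beta> * sv1\<close> show ?thesis
    by (rule that)
qed

lemma L_no_nonneg_lattice_difference:
  assumes p: "(x, y) \<in> L" and p': "(x', y') \<in> L"
    and diff: "x - x' = \<alpha> * sv - \<beta> * sv1" "y - y' = \<beta> * Pv1 - \<alpha> * Pv"
    and nonneg: "0 \<le> \<alpha>" "0 \<le> \<beta>" and nonzero: "\<alpha> \<noteq> 0 \<or> \<beta> \<noteq> 0"
  shows False
proof -
  note bounds = L_bounds[OF p] L_bounds[OF p']
  consider "\<beta> + 1 \<le> \<alpha>" | "\<alpha> \<le> \<beta> - 1" | "\<alpha> = \<beta>" "1 \<le> \<beta>"
    using nonneg nonzero by linarith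
  then show False
  proof cases
    case 1
    have "(\<beta> + 1) * sv + \<beta> * (sv - sv1) \<le> \<alpha> * sv + \<beta> * (sv - sv1)"
      using 1 s_bounds by (intro add_right_mono mult_right_mono) auto
    moreover have "0 \<le> \<beta> * (sv - sv1)"
      using nonneg s_bounds by simp
    ultimately have "sv \<le> x - x'"
      using diff by (simp add: algebra_simps)
    then show False
      using bounds by linarith
  next
    case 2
    have "\<alpha> * Pv \<le> (\<beta> - 1) * Pv"
      using 2 P_bounds by (intro mult_right_mono) auto
    moreover have "0 \<le> (\<beta> - 1) * (Pv1 - Pv)"
      using 2 nonneg P_bounds by simp
    ultimately have "Pv1 \<le> y - y'"
      using diff by (simp add: algebra_simps)
    then show False
      using bounds by linarith
  next
    case 3
    have "sv - sv1 \<le> \<beta> * (sv - sv1)" "Pv1 - Pv \<le> \<beta> * (Pv1 - Pv)"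
      using 3 s_bounds P_bounds by simp_all
    then have "sv - sv1 \<le> x" "Pv1 - Pv \<le> y"
      using diff 3 bounds by (simp_all add: algebra_simps)
    then show False
      using p unfolding L_def by auto
  qed
qed

lemma L_cong_imp_eq:
  assumes p: "(x, y) \<in> L" and p': "(x', y') \<in> L"
    and cong: "[d * x + c * y = d * x' + c * y'] (mod a)"
  shows "(x, y) = (x', y')"
proof -
  have "a dvd d * (x - x') + c * (y - y')"
    using cong by (simp add: cong_iff_dvd_diff algebra_simps)
  then obtain \<alpha> \<beta> where diff: "x - x' = \<alpha> * sv - \<beta> * sv1" "y - y' = \<beta> * Pv1 - \<alpha> * Pv"
    by (rule lattice_coordinates)
  note bounds = L_bounds[OF p] L_bounds[OF p']
  have "\<alpha> = 0 \<and> \<beta> = 0"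
  proof (rule ccontr)
    assume nonzero: "\<not> (\<alpha> = 0 \<and> \<beta> = 0)"
    consider "0 \<le> \<alpha>" "0 \<le> \<beta>" | "\<alpha> \<le> 0" "\<beta> \<le> 0" | "0 < \<alpha>" "\<beta> < 0" | "\<alpha> < 0" "0 < \<beta>"
      by linarith
    then show False
    proof cases
      case 1
      then show False
        using L_no_nonneg_lattice_difference[OF p p' diff] nonzero by blast
    next
      case 2
      have "x' - x = (- \<alpha>) * sv - (- \<beta>) * sv1" "y' - y = (- \<beta>) * Pv1 - (- \<alpha>) * Pv"
        using diff by (simp_all add: algebra_simps)
      from L_no_nonneg_lattice_difference[OF p' p this] show False
        using 2 nonzero by simp
    next
      case 3
      have "sv \<le> \<alpha> * sv" "\<beta> * sv1 \<le> 0"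
        using 3 s_bounds by (simp_all add: mult_le_cancel_right1 mult_nonpos_nonneg)
      then show False
        using diff bounds by linarith
    next
      case 4
      have "sv \<le> (- \<alpha>) * sv" "0 \<le> \<beta> * sv1"
        using 4 s_bounds by (simp_all only: mult_le_cancel_right1) simp_all
      then show False
        using diff bounds by linarith
    qed
  qed
  then show ?thesis
    using diff by simp
qed

lemma phi_inj_on_L: "inj_on \<phi> L"
proof (rule inj_onI)
  fix p p' assume "p \<in> L" "p' \<in> L" "\<phi> p = \<phi> p'"
  moreover obtain x y x' y' where "p = (x, y)" "p' = (x', y')"
    by fastforce
  moreover from calculation have "[d * x + c * y = d * x' + c * y'] (mod a)"
    using phi_cong[of a d k c x y] phi_cong[of a d k c x' y'] by (metis cong_sym cong_trans)
  ultimately show "p = p'"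
    using L_cong_imp_eq by blast
qed

definition weight :: "int \<Rightarrow> int \<Rightarrow> int" where
  "weight X Y = (Pv + Pv1) * X + (sv + sv1) * Y"

lemma weight_nonneg: "0 \<le> X \<Longrightarrow> 0 \<le> Y \<Longrightarrow> 0 \<le> weight X Y"
  unfolding weight_def using s_bounds P_bounds by simp

lemma basis_step:
  assumes "0 \<le> i" "0 \<le> j"
  defines "s \<equiv> i * sv1 - j * sv" and "q \<equiv> j * Pv - i * Pv1"
  shows "[d * (X + s) + c * (Y + q) = d * X + c * Y] (mod a)"
    and "\<phi> (X + s, Y + q) \<le> \<phi> (X, Y)"
    and "weight (X + s) (Y + q) = weight X Y - (i + j) * a"
proof -
  have "d * s + c * q = i * (d * sv1 - c * Pv1) - j * (d * sv - c * Pv)"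
    unfolding s_def q_def by (simp add: algebra_simps)
  then have lattice: "a dvd d * s + c * q"
    using lattice0 lattice1 by simp
  then show "[d * (X + s) + c * (Y + q) = d * X + c * Y] (mod a)"
    by (simp add: cong_iff_dvd_diff algebra_simps)
  have "(a + k * d) * s + k * c * q
      = i * ((a + k * d) * sv1 - k * c * Pv1) - j * ((a + k * d) * sv - k * c * Pv)"
    unfolding s_def q_def by (simp add: algebra_simps)
  also have "\<dots> \<le> 0"
    using mult_nonneg_nonpos[OF assms(1) R_nonpos] mult_nonneg_nonneg[OF assms(2) less_imp_le[OF R_pos]]
    by linarith
  finally show "\<phi> (X + s, Y + q) \<le> \<phi> (X, Y)"
    using phi_shift_le[OF pos lattice] by blast
  show "weight (X + s) (Y + q) = weight X Y - (i + j) * a"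
    unfolding weight_def s_def q_def det[symmetric] by (simp add: algebra_simps)
qed

lemma basis_step_into_quadrant:
  assumes "0 \<le> X" "0 \<le> Y" "(X, Y) \<notin> L"
  obtains i j where "0 \<le> i" "0 \<le> j" "0 < i + j"
    "0 \<le> X + (i * sv1 - j * sv)" "0 \<le> Y + (j * Pv - i * Pv1)"
proof -
  consider "Pv1 \<le> Y" | "sv \<le> X" | "sv - sv1 \<le> X" "X < sv" "Pv1 - Pv \<le> Y" "Y < Pv1"
    using assms unfolding L_def by fastforce
  then show ?thesis
  proof cases
    case 1
    then show ?thesis
      using that[of 1 0] assms s_bounds by simp
  next
    case 2
    then show ?thesis
      using that[of 0 1] assms P_bounds by simp
  next
    case 3
    then show ?thesis
      using that[of 1 1] by simp
  qed
qed

lemma exists_L_cong_phi_le: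
  assumes "0 \<le> X" "0 \<le> Y"
  shows "\<exists>x y. (x, y) \<in> L \<and> [d * x + c * y = d * X + c * Y] (mod a) \<and> \<phi> (x, y) \<le> \<phi> (X, Y)"
  using assms
proof (induction "nat (weight X Y)" arbitrary: X Y rule: less_induct)
  case less
  show ?case
  proof (cases "(X, Y) \<in> L")
    case True
    then show ?thesis
      using cong_refl by blast
  next
    case False
    then obtain i j where ij: "0 \<le> i" "0 \<le> j" "0 < i + j"
      and nonneg: "0 \<le> X + (i * sv1 - j * sv)" "0 \<le> Y + (j * Pv - i * Pv1)"
      using basis_step_into_quadrant less.prems by blast
    note step = basis_step[OF ij(1,2), of X Y]
    have "0 < (i + j) * a"
      using ij pos(1) by simp
    then have "nat (weight (X + (i * sv1 - j * sv)) (Y + (j * Pv - i * Pv1))) < nat (weight X Y)"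
      using step(3) weight_nonneg[OF nonneg] by linarith
    then obtain x y where "(x, y) \<in> L"
      and "[d * x + c * y = d * (X + (i * sv1 - j * sv)) + c * (Y + (j * Pv - i * Pv1))] (mod a)"
      and "\<phi> (x, y) \<le> \<phi> (X + (i * sv1 - j * sv), Y + (j * Pv - i * Pv1))"
      using less.hyps nonneg by blast
    with step(1,2) show ?thesis
      by (meson cong_trans order_trans)
  qed
qed

lemma phi_L_minus_a_notin_AA_semigroup:
  assumes p: "(x, y) \<in> L"
  shows "\<phi> (x, y) - a \<notin> AA_semigroup a d k c"
proof
  assume "\<phi> (x, y) - a \<in> AA_semigroup a d k c"
  then obtain X Y t where XYt: "0 \<le> X" "0 \<le> Y" "0 \<le> t" "\<phi> (x, y) - a = \<phi> (X, Y) + t * a"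
    using AA_semigroup_elem_eq_phi pos(2) by blast
  then obtain x' y' where p': "(x', y') \<in> L" and le: "\<phi> (x', y') \<le> \<phi> (X, Y)"
    and cong': "[d * x' + c * y' = d * X + c * Y] (mod a)"
    using exists_L_cong_phi_le by blast
  have "[\<phi> (X, Y) = \<phi> (x, y)] (mod a)"
    using XYt(4) by (simp add: cong_iff_dvd_diff algebra_simps eq_diff_eq)
  then have "[d * x' + c * y' = d * x + c * y] (mod a)"
    using cong' phi_cong[of a d k c X Y] phi_cong[of a d k c x y]
    by (meson cong_sym cong_trans)
  then have "(x', y') = (x, y)"
    using L_cong_imp_eq[OF p' p] by blast
  with le XYt(4) have "\<phi> (x, y) \<le> \<phi> (x, y) - a - t * a"
    by simp
  then show False
    using XYt(3) pos(1) mult_nonneg_nonneg[of t a] by linarith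
qed

end

lemma ex1_last_true:
  fixes P :: "int \<Rightarrow> bool"
  assumes "P lo" "lo \<le> hi" "\<not> P hi"
    and down: "\<And>i j. lo \<le> i \<Longrightarrow> i \<le> j \<Longrightarrow> P j \<Longrightarrow> P i"
  shows "\<exists>!i. lo \<le> i \<and> P i \<and> \<not> P (i + 1)"
proof -
  define I where "I = {i. lo \<le> i \<and> P i}"
  have "i \<le> hi" if "lo \<le> i" "P i" for i
    using down[of hi i] that assms(2,3) by (meson linorder_le_cases)
  then have "I \<subseteq> {lo..hi}"
    unfolding I_def by auto
  then have "finite I" "lo \<in> I"
    using assms(1) finite_subset unfolding I_def by auto
  define i where "i = Max I"
  have max: "i \<in> I" "\<And>j. j \<in> I \<Longrightarrow> j \<le> i"
    using \<open>finite I\<close> \<open>lo \<in> I\<close> unfolding i_def by (auto intro: Max_in)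
  then have "lo \<le> i \<and> P i \<and> \<not> P (i + 1)"
    using max(2)[of "i + 1"] unfolding I_def by auto
  moreover have "j = i" if "lo \<le> j \<and> P j \<and> \<not> P (j + 1)" for j
    using max(2)[of j] down[of "j + 1" i] calculation that unfolding I_def by force
  ultimately show ?thesis
    by blast
qed

definition AA_state_inv :: "int \<Rightarrow> int \<Rightarrow> int \<Rightarrow> int \<Rightarrow> int \<Rightarrow> int \<Rightarrow> int \<Rightarrow> bool" where
  "AA_state_inv a d c u w p r \<longleftrightarrow> 0 \<le> u \<and> 0 \<le> w \<and> (u = 0 \<longrightarrow> w = 0) \<and>
     (0 < u \<longrightarrow> w < u \<and> u * r - w * p = a \<and> 0 \<le> p \<and> p < r
        \<and> a dvd d * u - c * p \<and> a dvd d * w - c * r)"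

lemma AA_state_inv_step:
  assumes inv: "AA_state_inv a d c u w p r" and "0 < w"
  defines "s \<equiv> (- u) mod w"
  defines "q \<equiv> (u + s) div w"
  shows "AA_state_inv a d c w s r (q * r - p)"
proof -
  have u: "0 < u" "w < u" and det: "u * r - w * p = a" and P: "0 \<le> p" "p < r"
    and dvd: "a dvd d * u - c * p" "a dvd d * w - c * r"
    using inv \<open>0 < w\<close> unfolding AA_state_inv_def by auto
  have s: "0 \<le> s" "s < w"
    using \<open>0 < w\<close> by (simp_all add: s_def)
  have "(u + s) mod w = 0"
    unfolding s_def by (simp add: mod_add_right_eq)
  then have qw: "q * w = u + s"
    unfolding q_def using div_mult_mod_eq[of "u + s" w] by simp
  then have "1 * w < q * w"
    using u s by simp
  then have "2 \<le> q"
    using \<open>0 < w\<close> mult_right_less_imp_less by fastforce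
  then have "r < q * r - p"
    using P mult_right_mono[of 2 q r] by linarith
  moreover have "w * (q * r - p) - s * r = (q * w) * r - w * p - s * r"
    by (simp add: algebra_simps)
  then have "w * (q * r - p) - s * r = a"
    using det unfolding qw by (simp add: algebra_simps)
  moreover have "d * s - c * (q * r - p) = q * (d * w - c * r) - (d * u - c * p)"
    using qw by (simp add: algebra_simps flip: qw)
  then have "a dvd d * s - c * (q * r - p)"
    using dvd by simp
  ultimately show ?thesis
    using s P \<open>0 < w\<close> dvd unfolding AA_state_inv_def by auto
qed

lemma AA_state_inv_holds:
  assumes "0 \<le> s0" "s0 < a" "a dvd d * s0 - c"
  shows "case AA_state a s0 n of (u, w, p, r) \<Rightarrow> AA_state_inv a d c u w p r"
proof (induction n)
  case 0
  then show ?case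
    using assms unfolding AA_state_inv_def by simp
next
  case (Suc n)
  obtain u w p r where st: "AA_state a s0 n = (u, w, p, r)"
    by (cases "AA_state a s0 n") auto
  with Suc.IH have inv: "AA_state_inv a d c u w p r"
    by simp
  show ?case
  proof (cases "w = 0")
    case True
    then show ?thesis
      using st unfolding AA_state_inv_def by simp
  next
    case False
    with inv have "0 < w"
      unfolding AA_state_inv_def by simp
    with AA_state_inv_step[OF inv this] False st show ?thesis
      by (simp add: Let_def)
  qed
qed

locale AA_params =
  fixes a d k c :: int
  assumes pos: "0 < a" "0 < d" "0 < k" "0 < c"
    and gcd_ad: "gcd a d = 1"
begin

abbreviation ss where "ss \<equiv> s_seq a d c"
abbreviation PP where "PP \<equiv> P_seq a d c"
abbreviation RR where "RR \<equiv> R_seq a d k c"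
abbreviation mm where "mm \<equiv> m_idx a d c"
abbreviation vv where "vv \<equiv> v_idx a d k c"

lemma s_zero_spec: "0 \<le> s_zero a d c \<and> s_zero a d c < a \<and> a dvd d * s_zero a d c - c"
proof -
  have coprime_da: "coprime d a"
    using gcd_ad by (simp add: coprime_iff_gcd_eq_1 gcd.commute)
  obtain e where e: "[d * e = 1] (mod a)"
    using cong_solve_coprime_int[OF coprime_da] by blast
  define s where "s = (e * c) mod a"
  have "[d * s = d * e * c] (mod a)"
    unfolding s_def by (simp add: cong_scalar_left mult.assoc)
  also have "[d * e * c = c] (mod a)"
    using cong_scalar_right[OF e, of c] by simp
  finally have s_cong: "[d * s = c] (mod a)" .
  have s_range: "0 \<le> s" "s < a"
    using pos(1) by (simp_all add: s_def)
  have unique: "t = s" if t: "0 \<le> t" "t < a" "[d * t = c] (mod a)" for t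
  proof -
    have "[d * t = d * s] (mod a)"
      using cong_trans[OF t(3) cong_sym[OF s_cong]] .
    then have "[t = s] (mod a)"
      by (simp add: cong_mult_lcancel[OF coprime_da])
    with s_range t(1,2) show ?thesis
      by (simp add: cong_less_imp_eq_int)
  qed
  have "s_zero a d c = s"
    unfolding s_zero_def using s_range s_cong unique by (intro the_equality) blast+
  with s_range s_cong show ?thesis
    by (simp add: cong_iff_dvd_diff)
qed

lemma AA_state_eq_seq:
  assumes "-1 \<le> i"
  shows "AA_state a (s_zero a d c) (nat (i + 1)) = (ss i, ss (i + 1), PP i, PP (i + 1))"
proof -
  obtain u w p r where st: "AA_state a (s_zero a d c) (nat (i + 1)) = (u, w, p, r)"
    by (cases "AA_state a (s_zero a d c) (nat (i + 1))") auto
  moreover have "nat (i + 1 + 1) = Suc (nat (i + 1))"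
    using assms by simp
  ultimately show ?thesis
    unfolding s_seq_def P_seq_def by (simp add: Let_def)
qed

lemma AA_state_inv_seq: "-1 \<le> i \<Longrightarrow> AA_state_inv a d c (ss i) (ss (i + 1)) (PP i) (PP (i + 1))"
  using AA_state_inv_holds[OF _ _ _, of "s_zero a d c" a d c "nat (i + 1)"] s_zero_spec
  by (simp add: AA_state_eq_seq)

lemma seq_minus_one: "ss (-1) = a" "PP (-1) = 0"
  unfolding s_seq_def P_seq_def by simp_all

lemma s_seq_nonneg: "-1 \<le> i \<Longrightarrow> 0 \<le> ss i"
  using AA_state_inv_seq unfolding AA_state_inv_def by blast

lemma s_seq_pos_antimono:
  assumes "-1 \<le> i" "i \<le> j" "0 < ss j"
  shows "0 < ss i"
proof (rule ccontr)
  assume "\<not> 0 < ss i"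
  then have "ss i = 0"
    using s_seq_nonneg[OF assms(1)] by simp
  have "ss j' = 0" if "i \<le> j'" for j'
    using that
  proof (induction j' rule: int_ge_induct)
    case (step j')
    then show ?case
      using AA_state_inv_seq[of j'] assms(1) unfolding AA_state_inv_def by simp
  qed (fact \<open>ss i = 0\<close>)
  with assms(2,3) show False
    by simp
qed

lemma s_seq_eventually_zero: "\<exists>i\<ge>-1. ss i = 0"
proof (rule ccontr)
  assume "\<not> ?thesis"
  then have "0 < ss i" if "-1 \<le> i" for i
    using s_seq_nonneg[OF that] that by force
  then have decr: "ss (i + 1) < ss i" if "-1 \<le> i" for i
    using AA_state_inv_seq[OF that] that unfolding AA_state_inv_def by simp
  have "ss (-1 + int n) \<le> a - int n" for n
  proof (induction n)
    case (Suc n)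
    then show ?case
      using decr[of "-1 + int n"] by (simp add: add.assoc)
  qed (simp add: seq_minus_one)
  from this[of "nat a + 1"] s_seq_nonneg[of "-1 + int (nat a + 1)"] pos(1) show False
    by simp
qed

lemma m_idx_spec: "-1 \<le> mm \<and> 0 < ss mm \<and> ss (mm + 1) = 0"
proof -
  obtain i0 where "-1 \<le> i0" "ss i0 = 0"
    using s_seq_eventually_zero by blast
  then have "\<exists>!m. -1 \<le> m \<and> 0 < ss m \<and> \<not> 0 < ss (m + 1)"
    using seq_minus_one pos(1) s_seq_pos_antimono by (intro ex1_last_true[where hi = i0]) auto
  moreover have "(0 < ss m \<and> \<not> 0 < ss (m + 1)) \<longleftrightarrow> (0 < ss m \<and> ss (m + 1) = 0)" if "-1 \<le> m" for m
    using s_seq_nonneg[of "m + 1"] that by auto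
  ultimately have "\<exists>!m. -1 \<le> m \<and> 0 < ss m \<and> ss (m + 1) = 0"
    by (metis (no_types, lifting))
  then show ?thesis
    unfolding m_idx_def by (rule theI')
qed

lemma s_seq_pos: "-1 \<le> i \<Longrightarrow> i \<le> mm \<Longrightarrow> 0 < ss i"
  using s_seq_pos_antimono[of i mm] m_idx_spec by simp

lemma R_seq_step: "-1 \<le> i \<Longrightarrow> i \<le> mm \<Longrightarrow> RR (i + 1) \<le> RR i"
proof -
  assume i: "-1 \<le> i" "i \<le> mm"
  then have "ss (i + 1) \<le> ss i" "PP i \<le> PP (i + 1)"
    using AA_state_inv_seq[OF i(1)] s_seq_pos[OF i] unfolding AA_state_inv_def by simp_all
  moreover have "0 \<le> a + k * d" "0 \<le> k * c"
    using pos by simp_all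
  ultimately have "(a + k * d) * ss (i + 1) \<le> (a + k * d) * ss i" "k * c * PP i \<le> k * c * PP (i + 1)"
    by (simp_all add: mult_left_mono)
  then have "(a + k * d) * ss (i + 1) - k * c * PP (i + 1) \<le> (a + k * d) * ss i - k * c * PP i"
    by linarith
  then show ?thesis
    unfolding R_seq_def using pos(1) by (rule zdiv_mono1)
qed

lemma R_seq_antimono:
  assumes "-1 \<le> i" "i \<le> j" "j \<le> mm + 1"
  shows "RR j \<le> RR i"
  using assms(2,3)
proof (induction j rule: int_ge_induct)
  case (step j)
  then show ?case
    using R_seq_step[of j] assms(1) by fastforce
qed simp

lemma a_mult_R_seq:
  assumes "a dvd d * ss i - c * PP i"
  shows "a * RR i = (a + k * d) * ss i - k * c * PP i"
proof -
  obtain t where t: "d * ss i - c * PP i = a * t"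
    using assms by (elim dvdE)
  have "(a + k * d) * ss i - k * c * PP i = a * ss i + k * (d * ss i - c * PP i)"
    by (simp add: algebra_simps)
  also have "\<dots> = a * (ss i + k * t)"
    unfolding t by (simp add: algebra_simps)
  finally show ?thesis
    unfolding R_seq_def using pos(1) by simp
qed

lemma v_idx_spec: "-1 \<le> vv \<and> vv \<le> mm \<and> RR (vv + 1) \<le> 0 \<and> 0 < RR vv"
proof -
  have m: "-1 \<le> mm" "0 < ss mm" "ss (mm + 1) = 0"
    using m_idx_spec by auto
  have "a * RR (-1) = a * (a + k * d)"
    using a_mult_R_seq[of "-1"] seq_minus_one by (simp add: algebra_simps)
  then have first_pos: "0 < RR (-1)"
    using pos by (simp add: add_pos_pos)
  have "0 \<le> PP (mm + 1)"
    using AA_state_inv_seq[OF m(1)] m(2) unfolding AA_state_inv_def by simp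
  then have last_nonpos: "RR (mm + 1) \<le> 0"
    unfolding R_seq_def using m(3) pos by (simp add: div_nonpos_pos_le0)
  have "\<exists>!v. -1 \<le> v \<and> (v \<le> mm \<and> 0 < RR v) \<and> \<not> (v + 1 \<le> mm \<and> 0 < RR (v + 1))"
    using m(1) first_pos R_seq_antimono
    by (intro ex1_last_true[where hi = "mm + 1"]) fastforce+
  moreover have "(v \<le> mm \<and> 0 < RR v \<and> \<not> (v + 1 \<le> mm \<and> 0 < RR (v + 1)))
      \<longleftrightarrow> (v \<le> mm \<and> RR (v + 1) \<le> 0 \<and> 0 < RR v)" for v
    using last_nonpos by (cases "v = mm") auto
  ultimately have "\<exists>!v. -1 \<le> v \<and> v \<le> mm \<and> RR (v + 1) \<le> 0 \<and> 0 < RR v"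
    by simp
  then show ?thesis
    unfolding v_idx_def by (rule theI')
qed

lemma staircase_at_v: "staircase a d k c (ss vv) (ss (vv + 1)) (PP vv) (PP (vv + 1))"
proof -
  have v: "-1 \<le> vv" "vv \<le> mm" "RR (vv + 1) \<le> 0" "0 < RR vv"
    using v_idx_spec by auto
  have inv: "ss (vv + 1) < ss vv" "ss vv * PP (vv + 1) - ss (vv + 1) * PP vv = a"
    "0 \<le> PP vv" "PP vv < PP (vv + 1)"
    "a dvd d * ss vv - c * PP vv" "a dvd d * ss (vv + 1) - c * PP (vv + 1)"
    using AA_state_inv_seq[OF v(1)] s_seq_pos[OF v(1,2)] unfolding AA_state_inv_def by auto
  have "0 < a * RR vv" "a * RR (vv + 1) \<le> 0"
    using v(3,4) pos(1) by (simp_all add: mult_nonneg_nonpos)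
  then have "0 < (a + k * d) * ss vv - k * c * PP vv"
    "(a + k * d) * ss (vv + 1) - k * c * PP (vv + 1) \<le> 0"
    using a_mult_R_seq inv(5,6) by simp_all
  moreover have "coprime a d"
    using gcd_ad by (simp add: coprime_iff_gcd_eq_1)
  moreover have "0 \<le> ss (vv + 1)"
    using s_seq_nonneg v(1) by simp
  ultimately show ?thesis
    using pos inv by unfold_locales auto
qed

lemma L_set_eq: "L_set a d k c = staircase.L (ss vv) (ss (vv + 1)) (PP vv) (PP (vv + 1))"
  unfolding L_set_def staircase.L_def[OF staircase_at_v] Let_def ..

end

theorem mainTheorem6:
  fixes a d k c :: int
  assumes pos: "0 < a" "0 < d" "0 < k" "0 < c"
    and gcd_gens: "Gcd (AA_gens a d k c) = 1"
    and gcd_ad: "gcd a d = 1"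
    and psym: "pseudo_symmetric (AA_semigroup a d k c)"
    and p0: "(x0, y0) \<in> L_set a d k c"
    and phi0: "phi a d k c (x0, y0) = frobenius (AA_semigroup a d k c) + a"
    and p1: "(x1, y1) \<in> L_set a d k c"
    and phi1: "phi a d k c (x1, y1) = frobenius (AA_semigroup a d k c) div 2 + a"
  shows "2 * phi a d k c (x1, y1) = phi a d k c (x0, y0) + a
     \<and> (\<forall>p' p''. p' \<in> L_set a d k c \<longrightarrow> p'' \<in> L_set a d k c \<longrightarrow>
          2 * phi a d k c (x1, y1) = phi a d k c p' + phi a d k c p'' \<longrightarrow>
          p' = (x1, y1) \<and> p'' = (x1, y1))"
proof -
  interpret AA_params a d k c
    using pos gcd_ad by unfold_locales
  interpret staircase a d k c "ss vv" "ss (vv + 1)" "PP vv" "PP (vv + 1)"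
    by (rule staircase_at_v)
  let ?g = "frobenius (AA_semigroup a d k c)"
  have g_twice_half: "2 * (?g div 2) = ?g"
    using psym unfolding pseudo_symmetric_def by simp
  have gap: "\<phi> p - a \<notin> AA_semigroup a d k c" if "p \<in> L_set a d k c" for p
    using phi_L_minus_a_notin_AA_semigroup that L_set_eq by (cases p) simp
  have midpoint: "p = (x1, y1)" if p: "p \<in> L_set a d k c" and q: "q \<in> L_set a d k c"
    and sum: "2 * \<phi> (x1, y1) = \<phi> p + \<phi> q" for p q
  proof -
    have "(\<phi> p - a) + (\<phi> q - a) = ?g"
      using sum phi1 g_twice_half by linarith
    then have "\<phi> p = \<phi> (x1, y1)"
      using pseudo_symmetric_gap_sum[OF psym gap[OF p] gap[OF q]] phi1 by simp
    then show ?thesis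
      using inj_onD[OF phi_inj_on_L] p p1 L_set_eq by simp
  qed
  have "2 * \<phi> (x1, y1) = \<phi> (x0, y0) + a"
    using phi0 phi1 g_twice_half by linarith
  then show ?thesis
    using midpoint by (metis add.commute)
qed

end
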